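(* Let $R(k_1,k_2)\in\mathrm{End}(\mathbb{C}^N\otimes\mathbb{C}^N)$ satisfy the Yang–Baxter equation and unitarity $R_{12}(k_1,k_2)R_{21}(k_2,k_1)=\mathbb{I}\otimes\mathbb{I}$, let $\mathcal{A}_R$ be its ZF algebra with well-bred vertex operator $T(k)$, and let $B(k)$ be an $N\times N$ matrix with $R_{12}B_1R'_{21}B_2=B_2R'_{12}B_1\bar R_{21}$ and $B(k)B(-k)=\mathbb{I}_N$. Set $b(k)=T(k)B(k)T(-k)^{-1}$, $\tilde a(k)=\frac12(a(k)+b(k)a(-k))$. Let $\mathcal{F}_R$ be the Fock representation of $\mathcal{A}_R$, with vacuum $\Omega$ satisfying $a_i(k)\Omega=0$ for all $i,k$ and $T(k)\Omega=\Omega$ (i.e. $T^{ij}(k)\Omega=\delta_{ij}\Omega$). Then $\mathcal{F}_R$ is a Fock representation of the algebra generated by $\tilde a,\tilde a^\dagger,b$, in the sense that $\tilde a_i(k)\Omega=0$ and $b_{ij}(k)\Omega=B_{ij}(k)\Omega$ for all $i,j,k$.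
   Context: Notation: $R_{12}=R_{12}(k_1,k_2)$, $R_{21}=R_{21}(k_2,k_1)$, $R'_{12}=R_{12}(k_1,-k_2)$, $R'_{21}=R_{21}(k_2,-k_1)$, $\bar R_{21}=R_{21}(-k_2,-k_1)$; $M_1=M(k_1)\otimes\mathbb{I}$, $M_2=\mathbb{I}\otimes M(k_2)$. ZF algebra $\mathcal{A}_R$: generators $a_i(k),a_i^\dagger(k)$, with $a(k)$ column and $a^\dagger(k)$ row vectors, relations $a_1a_2=R_{21}a_2a_1$, $a_1^\dagger a_2^\dagger=a_2^\dagger a_1^\dagger R_{21}$, $a_1a_2^\dagger=a_2^\dagger R_{12}a_1+\delta(k_1-k_2)\sum_ie_i\otimes e_i^\dagger$. Well-bred vertex operator: an invertible matrix $T(k)=\sum T^{ij}(k)E_{ij}$ with entries in (a completion of) $\mathcal{A}_R$ satisfying $T_1a_2=R_{21}a_2T_1$, $T_1a_2^\dagger=a_2^\dagger R_{12}T_1$, $R_{12}T_1T_2=T_2T_1R_{12}$. $b_{ij}(k)$ denotes the $(i,j)$ entry of $b(k)$. *)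

theory Defs
  imports Complex_Main
begin

text \<open>Matrices with entries in a semiring, indexed by a finite type, as functions.
  For End(C^N (x) C^N) the index type is 'n \<times> 'n; entry R (i,j) (k,l)
  is the coefficient of E_ik (x) E_jl.\<close>

definition mm :: "('i::finite \<Rightarrow> 'i \<Rightarrow> 'b::semiring_1) \<Rightarrow> ('i \<Rightarrow> 'i \<Rightarrow> 'b) \<Rightarrow> 'i \<Rightarrow> 'i \<Rightarrow> 'b" where
  "mm A B x z = (\<Sum>y\<in>UNIV. A x y * B y z)"

definition idm :: "'i \<Rightarrow> 'i \<Rightarrow> 'b::zero_neq_one" where
  "idm x y = (if x = y then 1 else 0)"

text \<open>X_21 = P X_12 P (flip of tensor factors).\<close>
definition flip :: "('n \<times> 'n \<Rightarrow> 'n \<times> 'n \<Rightarrow> 'b) \<Rightarrow> 'n \<times> 'n \<Rightarrow> 'n \<times> 'n \<Rightarrow> 'b" where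
  "flip X x y = X (snd x, fst x) (snd y, fst y)"

text \<open>M_1 = M (x) I and M_2 = I (x) M.\<close>
definition emb1 :: "('n \<Rightarrow> 'n \<Rightarrow> 'b::zero_neq_one) \<Rightarrow> 'n \<times> 'n \<Rightarrow> 'n \<times> 'n \<Rightarrow> 'b" where
  "emb1 M x y = (if snd x = snd y then M (fst x) (fst y) else 0)"
definition emb2 :: "('n \<Rightarrow> 'n \<Rightarrow> 'b::zero_neq_one) \<Rightarrow> 'n \<times> 'n \<Rightarrow> 'n \<times> 'n \<Rightarrow> 'b" where
  "emb2 M x y = (if fst x = fst y then M (snd x) (snd y) else 0)"

definition emb12 :: "('n \<times> 'n \<Rightarrow> 'n \<times> 'n \<Rightarrow> 'b::zero_neq_one) \<Rightarrow> 'n \<times> 'n \<times> 'n \<Rightarrow> 'n \<times> 'n \<times> 'n \<Rightarrow> 'b" where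
  "emb12 X x y = (case x of (i,j,k) \<Rightarrow> case y of (i',j',k') \<Rightarrow>
      if k = k' then X (i,j) (i',j') else 0)"
definition emb13 :: "('n \<times> 'n \<Rightarrow> 'n \<times> 'n \<Rightarrow> 'b::zero_neq_one) \<Rightarrow> 'n \<times> 'n \<times> 'n \<Rightarrow> 'n \<times> 'n \<times> 'n \<Rightarrow> 'b" where
  "emb13 X x y = (case x of (i,j,k) \<Rightarrow> case y of (i',j',k') \<Rightarrow>
      if j = j' then X (i,k) (i',k') else 0)"
definition emb23 :: "('n \<times> 'n \<Rightarrow> 'n \<times> 'n \<Rightarrow> 'b::zero_neq_one) \<Rightarrow> 'n \<times> 'n \<times> 'n \<Rightarrow> 'n \<times> 'n \<times> 'n \<Rightarrow> 'b" where
  "emb23 X x y = (case x of (i,j,k) \<Rightarrow> case y of (i',j',k') \<Rightarrow>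
      if i = i' then X (j,k) (j',k') else 0)"

type_synonym 'n rmat = "real \<Rightarrow> real \<Rightarrow> 'n \<times> 'n \<Rightarrow> 'n \<times> 'n \<Rightarrow> complex"

definition YBE :: "('n::finite) rmat \<Rightarrow> bool" where
  "YBE R \<longleftrightarrow> (\<forall>k1 k2 k3.
     mm (mm (emb12 (R k1 k2)) (emb13 (R k1 k3))) (emb23 (R k2 k3)) =
     mm (mm (emb23 (R k2 k3)) (emb13 (R k1 k3))) (emb12 (R k1 k2)))"

definition unitary_R :: "('n::finite) rmat \<Rightarrow> bool" where
  "unitary_R R \<longleftrightarrow> (\<forall>k1 k2. mm (R k1 k2) (flip (R k2 k1)) = idm)"

text \<open>Relations of the ZF algebra, realised in a ring 'a containing a central copy
  sc(C) of the complex numbers; dlt is the (formal) delta function with values in 'a.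
  a :: column vector a(k), ad :: row vector a^dagger(k).\<close>
definition ZF_relations ::
  "(complex \<Rightarrow> 'a::ring_1) \<Rightarrow> (real \<Rightarrow> 'a) \<Rightarrow> ('n::finite) rmat \<Rightarrow>
   (real \<Rightarrow> 'n \<Rightarrow> 'a) \<Rightarrow> (real \<Rightarrow> 'n \<Rightarrow> 'a) \<Rightarrow> bool" where
  "ZF_relations sc dlt R a ad \<longleftrightarrow>
    (\<forall>k1 k2 i j. a k1 i * a k2 j =
        (\<Sum>p\<in>UNIV. \<Sum>q\<in>UNIV. sc (flip (R k2 k1) (i,j) (p,q)) * a k2 q * a k1 p)) \<and>
    (\<forall>k1 k2 p q. ad k1 p * ad k2 q =
        (\<Sum>i\<in>UNIV. \<Sum>j\<in>UNIV. ad k2 j * ad k1 i * sc (flip (R k2 k1) (i,j) (p,q)))) \<and>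
    (\<forall>k1 k2 i l. a k1 i * ad k2 l =
        (\<Sum>j\<in>UNIV. \<Sum>p\<in>UNIV. ad k2 j * sc (R k1 k2 (i,j) (p,l)) * a k1 p)
        + (if i = l then dlt (k1 - k2) else 0))"

definition well_bred ::
  "(complex \<Rightarrow> 'a::ring_1) \<Rightarrow> ('n::finite) rmat \<Rightarrow>
   (real \<Rightarrow> 'n \<Rightarrow> 'a) \<Rightarrow> (real \<Rightarrow> 'n \<Rightarrow> 'a) \<Rightarrow>
   (real \<Rightarrow> 'n \<Rightarrow> 'n \<Rightarrow> 'a) \<Rightarrow> (real \<Rightarrow> 'n \<Rightarrow> 'n \<Rightarrow> 'a) \<Rightarrow> bool" where
  "well_bred sc R a ad T Ti \<longleftrightarrow>
    (\<forall>k. mm (T k) (Ti k) = idm \<and> mm (Ti k) (T k) = idm) \<and>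
    (\<forall>k1 k2 i m j. T k1 i m * a k2 j =
        (\<Sum>p\<in>UNIV. \<Sum>q\<in>UNIV. sc (flip (R k2 k1) (i,j) (p,q)) * a k2 q * T k1 p m)) \<and>
    (\<forall>k1 k2 i m j. T k1 i m * ad k2 j =
        (\<Sum>q\<in>UNIV. \<Sum>p\<in>UNIV. ad k2 q * sc (R k1 k2 (i,q) (p,j)) * T k1 p m)) \<and>
    (\<forall>k1 k2 i j m n.
        (\<Sum>p\<in>UNIV. \<Sum>q\<in>UNIV. sc (R k1 k2 (i,j) (p,q)) * T k1 p m * T k2 q n) =
        (\<Sum>p\<in>UNIV. \<Sum>q\<in>UNIV. T k2 j q * T k1 i p * sc (R k1 k2 (p,q) (m,n))))"

definition reflection_eq :: "('n::finite) rmat \<Rightarrow> (real \<Rightarrow> 'n \<Rightarrow> 'n \<Rightarrow> complex) \<Rightarrow> bool" where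
  "reflection_eq R B \<longleftrightarrow> (\<forall>k1 k2.
     mm (mm (mm (R k1 k2) (emb1 (B k1))) (flip (R k2 (-k1)))) (emb2 (B k2)) =
     mm (mm (mm (emb2 (B k2)) (R k1 (-k2))) (emb1 (B k1))) (flip (R (-k2) (-k1))))"

definition bop :: "(complex \<Rightarrow> 'a::ring_1) \<Rightarrow> (real \<Rightarrow> 'n::finite \<Rightarrow> 'n \<Rightarrow> 'a) \<Rightarrow>
   (real \<Rightarrow> 'n \<Rightarrow> 'n \<Rightarrow> 'a) \<Rightarrow> (real \<Rightarrow> 'n \<Rightarrow> 'n \<Rightarrow> complex) \<Rightarrow> real \<Rightarrow> 'n \<Rightarrow> 'n \<Rightarrow> 'a" where
  "bop sc T Ti B k = mm (mm (T k) (\<lambda>p q. sc (B k p q))) (Ti (-k))"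

definition atilde :: "(complex \<Rightarrow> 'a::ring_1) \<Rightarrow> (real \<Rightarrow> 'n::finite \<Rightarrow> 'n \<Rightarrow> 'a) \<Rightarrow>
   (real \<Rightarrow> 'n \<Rightarrow> 'n \<Rightarrow> 'a) \<Rightarrow> (real \<Rightarrow> 'n \<Rightarrow> 'n \<Rightarrow> complex) \<Rightarrow> (real \<Rightarrow> 'n \<Rightarrow> 'a) \<Rightarrow>
   real \<Rightarrow> 'n \<Rightarrow> 'a" where
  "atilde sc T Ti B a k i = sc (1/2) * (a k i + (\<Sum>j\<in>UNIV. bop sc T Ti B k i j * a (-k) j))"

definition central_scalars :: "(complex \<Rightarrow> 'a::ring_1) \<Rightarrow> bool" where
  "central_scalars sc \<longleftrightarrow> sc 1 = 1 \<and> (\<forall>x y. sc (x + y) = sc x + sc y) \<and>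
     (\<forall>x y. sc (x * y) = sc x * sc y) \<and> (\<forall>c x. sc c * x = x * sc c)"

definition ring_action :: "('a::ring_1 \<Rightarrow> 'v::ab_group_add \<Rightarrow> 'v) \<Rightarrow> bool" where
  "ring_action act \<longleftrightarrow> (\<forall>v. act 1 v = v) \<and> (\<forall>x y v. act (x * y) v = act x (act y v)) \<and>
     (\<forall>x y v. act (x + y) v = act x v + act y v) \<and> (\<forall>x v w. act x (v + w) = act x v + act x w)"

end

theory Submission
  imports Defs
begin

text \<open>Only the vacuum conditions and the invertibility of T enter.
  Since T(-k) fixes \<Omega> and T(-k)^{-1} T(-k) = I, also T(-k)^{-1} fixes \<Omega>. Hence
  b(k) \<Omega> = T(k) B(k) \<Omega> = B(k) T(k) \<Omega> = B(k) \<Omega>, the scalars B(k) being central,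
  and a~(k) \<Omega> = (a(k) \<Omega> + b(k) a(-k) \<Omega>)/2 = 0.\<close>

lemma ring_action_mult: "ring_action act \<Longrightarrow> act (x * y) v = act x (act y v)"
  unfolding ring_action_def by blast

lemma ring_action_add_left: "ring_action act \<Longrightarrow> act (x + y) v = act x v + act y v"
  unfolding ring_action_def by blast

lemma ring_action_zero_left:
  assumes "ring_action act" shows "act 0 v = 0"
proof -
  have "act (0 + 0) v = act 0 v + act 0 v" using assms unfolding ring_action_def by blast
  then show ?thesis by simp
qed

lemma ring_action_zero_right:
  assumes "ring_action act" shows "act x 0 = 0"
proof -
  have "act x (0 + 0) = act x 0 + act x 0" using assms unfolding ring_action_def by blast
  then show ?thesis by simp
qed

lemma ring_action_sum_left:
  assumes "ring_action act" shows "act (\<Sum>p\<in>S. f p) v = (\<Sum>p\<in>S. act (f p) v)"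
  by (induction S rule: infinite_finite_induct)
    (simp_all add: ring_action_zero_left[OF assms] ring_action_add_left[OF assms])

definition fixes_vector ::
    "('a::ring_1 \<Rightarrow> 'v::ab_group_add \<Rightarrow> 'v) \<Rightarrow> 'v \<Rightarrow> ('i \<Rightarrow> 'i \<Rightarrow> 'a) \<Rightarrow> bool" where
  "fixes_vector act v M \<longleftrightarrow> (\<forall>i j. act (M i j) v = (if i = j then v else 0))"

lemma act_mm_fixes_vector_right:
  assumes act: "ring_action act" and Y: "fixes_vector act v Y"
  shows "act (mm X Y i j) v = act (X i j) v"
proof -
  have "act (mm X Y i j) v = (\<Sum>p\<in>UNIV. act (X i p) (act (Y p j) v))"
    by (simp add: mm_def ring_action_sum_left[OF act] ring_action_mult[OF act])
  also have "\<dots> = (\<Sum>p\<in>UNIV. if p = j then act (X i j) v else 0)"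
    using Y by (intro sum.cong) (simp_all add: fixes_vector_def ring_action_zero_right[OF act])
  finally show ?thesis by simp
qed

lemma fixes_vector_left_inverse:
  assumes act: "ring_action act" and M: "fixes_vector act v M" and inv: "mm N M = idm"
  shows "fixes_vector act v N"
  unfolding fixes_vector_def
proof (intro allI)
  fix i j
  have "act (N i j) v = act (mm N M i j) v"
    using act_mm_fixes_vector_right[OF act M] by simp
  also have "\<dots> = (if i = j then v else 0)"
    using act inv by (simp add: idm_def ring_action_def ring_action_zero_left[OF act])
  finally show "act (N i j) v = (if i = j then v else 0)" .
qed

lemma act_mm_scalars_fixes_vector_left:
  assumes act: "ring_action act" and sc: "central_scalars sc" and X: "fixes_vector act v X"
  shows "act (mm X (\<lambda>p q. sc (C p q)) i j) v = act (sc (C i j)) v"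
proof -
  have "act (mm X (\<lambda>p q. sc (C p q)) i j) v = (\<Sum>p\<in>UNIV. act (sc (C p j)) (act (X i p) v))"
    using sc by (simp add: mm_def central_scalars_def ring_action_sum_left[OF act]
        flip: ring_action_mult[OF act])
  also have "\<dots> = (\<Sum>p\<in>UNIV. if p = i then act (sc (C i j)) v else 0)"
    using X by (intro sum.cong) (auto simp: fixes_vector_def ring_action_zero_right[OF act])
  finally show ?thesis by simp
qed

theorem mainTheorem3:
  fixes R :: "('n::finite) rmat"
    and sc :: "complex \<Rightarrow> 'a::ring_1"
    and dlt :: "real \<Rightarrow> 'a"
    and a ad :: "real \<Rightarrow> 'n \<Rightarrow> 'a"
    and T Ti :: "real \<Rightarrow> 'n \<Rightarrow> 'n \<Rightarrow> 'a"
    and B :: "real \<Rightarrow> 'n \<Rightarrow> 'n \<Rightarrow> complex"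
    and act :: "'a \<Rightarrow> 'v::ab_group_add \<Rightarrow> 'v"
    and \<Omega> :: 'v
  assumes "YBE R"
    and "unitary_R R"
    and "central_scalars sc"
    and "ZF_relations sc dlt R a ad"
    and "well_bred sc R a ad T Ti"
    and "reflection_eq R B"
    and "\<forall>k. mm (B k) (B (-k)) = idm"
    and "ring_action act"
    and "\<forall>v. \<exists>x. act x \<Omega> = v"
    and "\<forall>k i. act (a k i) \<Omega> = 0"
    and "\<forall>k i j. act (T k i j) \<Omega> = (if i = j then \<Omega> else 0)"
  shows "(\<forall>k i. act (atilde sc T Ti B a k i) \<Omega> = 0) \<and>
         (\<forall>k i j. act (bop sc T Ti B k i j) \<Omega> = act (sc (B k i j)) \<Omega>)"
proof -
  note act = \<open>ring_action act\<close>
  have T: "fixes_vector act \<Omega> (T k)" for k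
    using assms(11) by (simp add: fixes_vector_def)
  have Ti: "fixes_vector act \<Omega> (Ti k)" for k
    using assms(5) by (intro fixes_vector_left_inverse[OF act T[of k]]) (simp add: well_bred_def)
  have b: "act (bop sc T Ti B k i j) \<Omega> = act (sc (B k i j)) \<Omega>" for k i j
    unfolding bop_def act_mm_fixes_vector_right[OF act Ti]
    by (rule act_mm_scalars_fixes_vector_left[OF act assms(3) T])
  have "act (atilde sc T Ti B a k i) \<Omega> = 0" for k i
    using act assms(10)
    by (simp add: atilde_def ring_action_def ring_action_sum_left[OF act]
        ring_action_zero_right[OF act])
  with b show ?thesis by blast
qed

end
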